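(* Let $d\geq 2$ be even. Then there is a constant $C>0$, independent of $q$, $j$ and $g$, such that for every finite field $\mathbb F_q$ of odd characteristic, every $j\in\mathbb F_q\setminus\{0\}$, with $S_j=\{x\in\mathbb F_q^d: x_1^2+\cdots+x_d^2=j\}$, and every homogeneous function of degree zero $g:\mathbb F_q^d\to\mathbb C$, $$\Big(\frac{1}{|S_j|}\sum_{x\in S_j}|\widehat g(x)|^2\Big)^{1/2}\le C\Big(\sum_{m\in\mathbb F_q^d}|g(m)|^{\frac{2d+4}{d+4}}\Big)^{\frac{d+4}{2d+4}}.$$
   Context: $\mathbb F_q$ denotes a finite field with $q$ elements whose characteristic is greater than two, and $\chi$ is a fixed nontrivial additive character of $\mathbb F_q$. For $g:\mathbb F_q^d\to\mathbb C$, its Fourier transform is $\widehat g(x)=\sum_{m\in\mathbb F_q^d}\chi(-m\cdot x)g(m)$ for $x\in\mathbb F_q^d$. A function $g:\mathbb F_q^d\to\mathbb C$ is homogeneous of degree zero if $g(sm)=g(m)$ for all $m\in\mathbb F_q^d$ and all $s\in\mathbb F_q\setminus\{0\}$. *)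

theory Defs
  imports "HOL-Analysis.Analysis" "HOL-Algebra.Ring" "HOL-Library.FuncSet"
begin

text \<open>A finite field is modelled as an HOL-Algebra field record R whose carrier
  is a finite set of natural numbers (every finite field is isomorphic to one of these),
  so that the constant C can be quantified before all finite fields.\<close>

definition vecs :: "('a, 'b) ring_scheme \<Rightarrow> nat \<Rightarrow> (nat \<Rightarrow> 'a) set" where
  "vecs R d = PiE {..<d} (\<lambda>_. carrier R)"

definition dotp :: "('a, 'b) ring_scheme \<Rightarrow> nat \<Rightarrow> (nat \<Rightarrow> 'a) \<Rightarrow> (nat \<Rightarrow> 'a) \<Rightarrow> 'a" where
  "dotp R d m x = finsum R (\<lambda>i. m i \<otimes>\<^bsub>R\<^esub> x i) {..<d}"

definition char_gt_two :: "('a, 'b) ring_scheme \<Rightarrow> bool" where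
  "char_gt_two R \<longleftrightarrow> \<one>\<^bsub>R\<^esub> \<oplus>\<^bsub>R\<^esub> \<one>\<^bsub>R\<^esub> \<noteq> \<zero>\<^bsub>R\<^esub>"

definition nontrivial_add_char :: "('a, 'b) ring_scheme \<Rightarrow> ('a \<Rightarrow> complex) \<Rightarrow> bool" where
  "nontrivial_add_char R chi \<longleftrightarrow>
     (\<forall>a\<in>carrier R. chi a \<noteq> 0) \<and>
     (\<forall>a\<in>carrier R. \<forall>b\<in>carrier R. chi (a \<oplus>\<^bsub>R\<^esub> b) = chi a * chi b) \<and>
     (\<exists>a\<in>carrier R. chi a \<noteq> 1)"

definition fourier :: "('a, 'b) ring_scheme \<Rightarrow> ('a \<Rightarrow> complex) \<Rightarrow> nat \<Rightarrow>
    ((nat \<Rightarrow> 'a) \<Rightarrow> complex) \<Rightarrow> (nat \<Rightarrow> 'a) \<Rightarrow> complex" where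
  "fourier R chi d g x = (\<Sum>m\<in>vecs R d. chi (\<ominus>\<^bsub>R\<^esub> dotp R d m x) * g m)"

definition sphere_set :: "('a, 'b) ring_scheme \<Rightarrow> nat \<Rightarrow> 'a \<Rightarrow> (nat \<Rightarrow> 'a) set" where
  "sphere_set R d j = {x \<in> vecs R d. dotp R d x x = j}"

definition homogeneous_deg0 :: "('a, 'b) ring_scheme \<Rightarrow> nat \<Rightarrow> ((nat \<Rightarrow> 'a) \<Rightarrow> complex) \<Rightarrow> bool" where
  "homogeneous_deg0 R d g \<longleftrightarrow>
     (\<forall>m\<in>vecs R d. \<forall>s\<in>carrier R - {\<zero>\<^bsub>R\<^esub>}.
        g (\<lambda>i\<in>{..<d}. s \<otimes>\<^bsub>R\<^esub> m i) = g m)"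

end

theory Submission
  imports Defs
begin

text \<open>Since \<open>p = (2d + 4)/(d + 4) \<le> 2\<close>, the \<open>\<ell>\<^sup>p\<close>-norm of \<open>g\<close> dominates its
  \<open>\<ell>\<^sup>2\<close>-norm, so with \<open>C = \<surd>6\<close> it suffices to bound the average of \<open>|\<hat>g|\<^sup>2\<close> over
  \<open>S\<^sub>j\<close> by \<open>6 \<Sum>|g|\<^sup>2\<close>. Homogeneity of \<open>g\<close> passes to \<open>\<hat>g\<close>, and the dilation map
  \<open>(x, s) \<mapsto> s x\<close> from \<open>S\<^sub>j \<times> F\<^sub>q\<^sup>*\<close> to \<open>F\<^sub>q\<^sup>d\<close> is at most two-to-one, so
  \<open>(q - 1) \<Sum>\<^bsub>S\<^sub>j\<^esub> |\<hat>g|\<^sup>2 \<le> 2 \<Sum> |\<hat>g|\<^sup>2 = 2 q\<^sup>d \<Sum> |g|\<^sup>2\<close> by Plancherel.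
  Finally \<open>q\<^sup>d \<le> 3 (q - 1) |S\<^sub>j|\<close>: for even \<open>d\<close>, multiplying each coordinate pair by
  \<open>a + b i\<close> with \<open>a\<^sup>2 + b\<^sup>2 = j/k\<close> maps every nonzero sphere \<open>S\<^sub>k\<close> injectively into
  \<open>S\<^sub>j\<close>, and in odd characteristic the null sphere has at most twice as many points as its
  complement.\<close>

lemma card_le_twice_card_image:
  assumes "finite A" and "\<And>y. card {x\<in>A. f x = y} \<le> 2"
  shows "card A \<le> 2 * card (f ` A)"
proof -
  have "A = (\<Union>y\<in>f ` A. {x\<in>A. f x = y})" by auto
  hence "card A \<le> (\<Sum>y\<in>f ` A. card {x\<in>A. f x = y})"
    using card_UN_le[of "f ` A" "\<lambda>y. {x\<in>A. f x = y}"] assms(1) by simp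
  also have "\<dots> \<le> (\<Sum>y\<in>f ` A. 2)" by (intro sum_mono assms(2))
  finally show ?thesis by simp
qed

lemma card_le_twice_card_complement:
  assumes "finite V" and "S \<subseteq> V"
    and "inj_on f V" and "f ` V \<subseteq> V" and "inj_on g V" and "g ` V \<subseteq> V"
    and "\<And>x. x \<in> S \<Longrightarrow> f x \<notin> S \<or> g x \<notin> S"
  shows "card S \<le> 2 * card (V - S)"
proof -
  let ?A = "{x\<in>S. f x \<notin> S}" and ?B = "{x\<in>S. g x \<notin> S}"
  have "card ?A \<le> card (V - S)"
    by (rule card_inj_on_le[where f = f]) (use assms in \<open>auto intro: inj_on_subset\<close>)
  moreover have "card ?B \<le> card (V - S)"
    by (rule card_inj_on_le[where f = g]) (use assms in \<open>auto intro: inj_on_subset\<close>)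
  moreover have "S = ?A \<union> ?B" using assms(7) by auto
  hence "card S \<le> card ?A + card ?B" by (metis card_Un_le)
  ultimately show ?thesis by linarith
qed

lemma l2_le_lp_norm:
  fixes f :: "'x \<Rightarrow> real"
  assumes "finite A" and nonneg: "\<And>m. m \<in> A \<Longrightarrow> f m \<ge> 0"
    and p: "0 < p" "p \<le> 2" and pe: "p * e = 1"
  shows "sqrt (\<Sum>m\<in>A. (f m)\<^sup>2) \<le> (\<Sum>m\<in>A. f m powr p) powr e"
proof -
  define T where "T = (\<Sum>m\<in>A. f m powr p)"
  define N where "N = T powr e"
  have N0: "N \<ge> 0" unfolding N_def by simp
  show ?thesis
  proof (cases "T = 0")
    case True
    hence "\<forall>m\<in>A. f m = 0" using \<open>finite A\<close> unfolding T_def by (subst (asm) sum_nonneg_eq_0_iff) auto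
    thus ?thesis by simp
  next
    case False
    hence T: "T > 0" unfolding T_def by (metis powr_ge_zero sum_nonneg order_le_less)
    have "e = 1 / p" using pe p by (simp add: field_simps)
    hence e: "e > 0" using p by simp
    have "N powr p = T" unfolding N_def using T by (simp add: powr_powr mult.commute[of e p] pe)
    have f_le_N: "f m \<le> N" if m: "m \<in> A" for m
    proof -
      have "f m powr p \<le> T" unfolding T_def using \<open>finite A\<close> m by (intro member_le_sum) auto
      hence "(f m powr p) powr e \<le> N" unfolding N_def using e by (intro powr_mono2) auto
      thus ?thesis using nonneg[OF m] by (simp add: powr_powr pe)
    qed
    have "(\<Sum>m\<in>A. (f m)\<^sup>2) \<le> (\<Sum>m\<in>A. f m powr p * N powr (2 - p))"
    proof (intro sum_mono)
      fix m assume m: "m \<in> A"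
      have "(f m)\<^sup>2 = f m powr p * f m powr (2 - p)"
        using nonneg[OF m] by (simp add: powr_add[symmetric] powr_numeral)
      also have "\<dots> \<le> f m powr p * N powr (2 - p)"
        using f_le_N[OF m] nonneg[OF m] p by (intro mult_left_mono powr_mono2) auto
      finally show "(f m)\<^sup>2 \<le> f m powr p * N powr (2 - p)" .
    qed
    also have "\<dots> = N powr p * N powr (2 - p)"
      using \<open>N powr p = T\<close> unfolding T_def by (simp add: sum_distrib_right)
    also have "\<dots> = N\<^sup>2" using N0 by (simp add: powr_add[symmetric] powr_numeral)
    finally show ?thesis using N0 unfolding N_def T_def by (simp add: real_le_lsqrt)
  qed
qed

locale finite_field = field R for R :: "('a, 'b) ring_scheme" (structure) +
  assumes finite_carrier: "finite (carrier R)"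
begin

lemma nonzero_inverse:
  assumes "s \<in> carrier R" and "s \<noteq> \<zero>"
  shows "inv s \<in> carrier R" and "inv s \<otimes> s = \<one>" and "s \<otimes> inv s = \<one>"
  using assms field_Units by auto

lemma two_le_card_carrier: "2 \<le> card (carrier R)"
proof -
  have "card {\<zero>, \<one>} \<le> card (carrier R)" using finite_carrier by (intro card_mono) auto
  thus ?thesis using zero_not_one by simp
qed

lemma minus_eq_zero_iff: "a \<in> carrier R \<Longrightarrow> b \<in> carrier R \<Longrightarrow> a \<ominus> b = \<zero> \<longleftrightarrow> a = b"
  by (metis a_minus_def add.inv_closed minus_equality r_neg)

lemma square_eq_square_iff:
  assumes a: "a \<in> carrier R" and b: "b \<in> carrier R"
  shows "a \<otimes> a = b \<otimes> b \<longleftrightarrow> a = b \<or> a = \<ominus> b"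
proof
  assume "a \<otimes> a = b \<otimes> b"
  hence "a \<otimes> a \<ominus> b \<otimes> b = \<zero>" using a b minus_eq_zero_iff by simp
  moreover have "(a \<ominus> b) \<otimes> (a \<oplus> b) = a \<otimes> a \<ominus> b \<otimes> b" using a b by algebra
  ultimately have "a \<ominus> b = \<zero> \<or> a \<oplus> b = \<zero>" using a b by (intro integral) auto
  thus "a = b \<or> a = \<ominus> b" using a b minus_eq_zero_iff by (metis minus_equality)
next
  assume "a = b \<or> a = \<ominus> b"
  thus "a \<otimes> a = b \<otimes> b" using a b by (auto simp: l_minus r_minus)
qed

lemma card_squares: "card (carrier R) + 1 \<le> 2 * card ((\<lambda>a. a \<otimes> a) ` carrier R)"
proof -
  let ?sq = "\<lambda>a. a \<otimes> a" and ?K = "carrier R - {\<zero>}"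
  have "card {x \<in> ?K. x \<otimes> x = y} \<le> 2" for y
  proof (cases "\<exists>a\<in>?K. a \<otimes> a = y")
    case True
    then obtain a where a: "a \<in> ?K" "a \<otimes> a = y" by blast
    have "{x \<in> ?K. x \<otimes> x = y} \<subseteq> {a, \<ominus> a}" using a square_eq_square_iff by auto
    hence "card {x \<in> ?K. x \<otimes> x = y} \<le> card {a, \<ominus> a}" by (intro card_mono) auto
    also have "\<dots> \<le> 2" by (simp add: card_insert_le_m1)
    finally show ?thesis .
  next
    case False
    hence "{x \<in> ?K. x \<otimes> x = y} = {}" by auto
    thus ?thesis by (metis card.empty zero_le)
  qed
  hence "card ?K \<le> 2 * card (?sq ` ?K)"
    using finite_carrier by (intro card_le_twice_card_image) auto
  moreover have "?sq ` carrier R = insert \<zero> (?sq ` ?K)" by force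
  moreover have "\<zero> \<notin> ?sq ` ?K"
  proof
    assume "\<zero> \<in> ?sq ` ?K"
    then obtain a where "a \<in> ?K" "a \<otimes> a = \<zero>" by force
    thus False using integral[of a a] by blast
  qed
  moreover have "card ?K = card (carrier R) - 1"
    using finite_carrier by (simp add: card_Diff_singleton)
  ultimately show ?thesis using two_le_card_carrier finite_carrier by simp
qed

text \<open>The squares and the elements \<open>t - a\<^sup>2\<close> form two subsets of size at least
  \<open>(q + 1) / 2\<close>, so they meet.\<close>
lemma sum_of_two_squares:
  assumes t: "t \<in> carrier R"
  obtains a b where "a \<in> carrier R" "b \<in> carrier R" "t = a \<otimes> a \<oplus> b \<otimes> b"
proof -
  define Q where "Q = (\<lambda>a. a \<otimes> a) ` carrier R"
  define B where "B = (\<lambda>z. t \<ominus> z) ` Q"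
  have QC: "Q \<subseteq> carrier R" and BC: "B \<subseteq> carrier R" unfolding Q_def B_def using t by auto
  have "inj_on (\<lambda>z. t \<ominus> z) Q"
  proof (rule inj_onI)
    fix x y assume "x \<in> Q" "y \<in> Q" "t \<ominus> x = t \<ominus> y"
    hence "x \<in> carrier R" "y \<in> carrier R" "t \<ominus> x = t \<ominus> y" using QC by auto
    have "x = t \<ominus> (t \<ominus> x)" using \<open>x \<in> carrier R\<close> t by algebra
    also have "\<dots> = y" using \<open>t \<ominus> x = t \<ominus> y\<close> \<open>y \<in> carrier R\<close> t by algebra
    finally show "x = y" .
  qed
  hence "card B = card Q" unfolding B_def by (rule card_image)
  have "Q \<inter> B \<noteq> {}"
  proof
    assume "Q \<inter> B = {}"
    hence "card (Q \<union> B) = card Q + card B"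
      using QC BC finite_carrier by (intro card_Un_disjoint) (auto intro: finite_subset)
    moreover have "card (Q \<union> B) \<le> card (carrier R)"
      using QC BC finite_carrier by (intro card_mono) auto
    ultimately show False using card_squares \<open>card B = card Q\<close> unfolding Q_def by linarith
  qed
  then obtain a b where ab: "a \<in> carrier R" "b \<in> carrier R" "a \<otimes> a = t \<ominus> b \<otimes> b"
    unfolding Q_def B_def by auto
  have "t = (t \<ominus> b \<otimes> b) \<oplus> b \<otimes> b" using t ab by algebra
  thus thesis using ab that by simp
qed

lemma vecs_finite: "finite (vecs R d)"
  unfolding vecs_def by (simp add: finite_PiE finite_carrier)

lemma card_vecs: "card (vecs R d) = card (carrier R) ^ d"
  unfolding vecs_def by (simp add: card_PiE)

lemma vecs_memD: "x \<in> vecs R d \<Longrightarrow> i < d \<Longrightarrow> x i \<in> carrier R"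
  unfolding vecs_def by auto

lemma vecs_eqI: "x \<in> vecs R d \<Longrightarrow> y \<in> vecs R d \<Longrightarrow> (\<And>i. i < d \<Longrightarrow> x i = y i) \<Longrightarrow> x = y"
  unfolding vecs_def by (metis PiE_ext lessThan_iff)

lemma restrict_in_vecs: "(\<And>i. i < d \<Longrightarrow> f i \<in> carrier R) \<Longrightarrow> (\<lambda>i\<in>{..<d}. f i) \<in> vecs R d"
  unfolding vecs_def by auto

lemma dotp_closed: "x \<in> vecs R d \<Longrightarrow> y \<in> vecs R d \<Longrightarrow> dotp R d x y \<in> carrier R"
  unfolding dotp_def by (intro finsum_closed) (auto simp: vecs_memD)

lemma dotp_commute: "x \<in> vecs R d \<Longrightarrow> y \<in> vecs R d \<Longrightarrow> dotp R d x y = dotp R d y x"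
  unfolding dotp_def by (intro finsum_cong) (auto simp: vecs_memD m_comm)

lemma sphere_subset_vecs: "sphere_set R d j \<subseteq> vecs R d"
  unfolding sphere_set_def by auto

definition shift :: "nat \<Rightarrow> 'a \<Rightarrow> (nat \<Rightarrow> 'a) \<Rightarrow> nat \<Rightarrow> 'a" where
  "shift i t y = y(i := y i \<oplus> t)"

lemma shift_in_vecs: "y \<in> vecs R d \<Longrightarrow> i < d \<Longrightarrow> t \<in> carrier R \<Longrightarrow> shift i t y \<in> vecs R d"
  unfolding vecs_def shift_def by (auto simp: PiE_iff extensional_def)

lemma bij_betw_shift:
  assumes "i < d" and "t \<in> carrier R"
  shows "bij_betw (shift i t) (vecs R d) (vecs R d)"
proof (rule bij_betw_byWitness[where f' = "shift i (\<ominus> t)"])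
  show "\<forall>y\<in>vecs R d. shift i (\<ominus> t) (shift i t y) = y" "\<forall>y\<in>vecs R d. shift i t (shift i (\<ominus> t) y) = y"
    using assms by (auto simp: shift_def a_assoc r_neg l_neg vecs_memD)
qed (use assms shift_in_vecs in auto)

lemma dotp_shift:
  assumes w: "w \<in> vecs R d" and y: "y \<in> vecs R d" and i: "i < d" and t: "t \<in> carrier R"
  shows "dotp R d w (shift i t y) = dotp R d w y \<oplus> w i \<otimes> t"
proof -
  have "dotp R d w (shift i t y) = (\<Oplus>k\<in>{..<d}. w k \<otimes> y k \<oplus> (if i = k then w k \<otimes> t else \<zero>))"
    unfolding dotp_def shift_def using w y t by (intro finsum_cong') (auto simp: vecs_memD r_distr)
  also have "\<dots> = dotp R d w y \<oplus> (\<Oplus>k\<in>{..<d}. if i = k then w k \<otimes> t else \<zero>)"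
    unfolding dotp_def using w y t by (intro finsum_addf) (auto simp: vecs_memD)
  also have "(\<Oplus>k\<in>{..<d}. if i = k then w k \<otimes> t else \<zero>) = w i \<otimes> t"
    using w t i by (intro finsum_singleton) (auto simp: vecs_memD)
  finally show ?thesis .
qed

lemma dotp_shift_self:
  assumes x: "x \<in> vecs R d" and i: "i < d" and t: "t \<in> carrier R"
  shows "dotp R d (shift i t x) (shift i t x) = dotp R d x x \<oplus> (x i \<oplus> x i \<oplus> t) \<otimes> t"
proof -
  have xi: "x i \<in> carrier R" using x i by (rule vecs_memD)
  have sx: "shift i t x \<in> vecs R d" using x i t by (rule shift_in_vecs)
  have "dotp R d (shift i t x) (shift i t x) = dotp R d x (shift i t x) \<oplus> (x i \<oplus> t) \<otimes> t"
    using dotp_shift[OF sx x i t] dotp_commute[OF sx x] by (simp add: shift_def)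
  also have "\<dots> = dotp R d x x \<oplus> (x i \<oplus> x i \<oplus> t) \<otimes> t"
    using dotp_shift[OF x x i t] dotp_closed[OF x x] xi t by algebra
  finally show ?thesis .
qed

text \<open>If \<open>x\<close> is null, the norms of \<open>x \<pm> e\<^sub>0\<close> add up to \<open>2 \<noteq> 0\<close>.\<close>
lemma card_null_sphere_le:
  assumes "char_gt_two R" and "0 < d"
  shows "card (sphere_set R d \<zero>) \<le> 2 * card (vecs R d - sphere_set R d \<zero>)"
proof (rule card_le_twice_card_complement)
  show "finite (vecs R d)" "sphere_set R d \<zero> \<subseteq> vecs R d"
    by (rule vecs_finite, rule sphere_subset_vecs)
  show "inj_on (shift 0 \<one>) (vecs R d)" "shift 0 \<one> ` vecs R d \<subseteq> vecs R d"
    "inj_on (shift 0 (\<ominus> \<one>)) (vecs R d)" "shift 0 (\<ominus> \<one>) ` vecs R d \<subseteq> vecs R d"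
    using bij_betw_shift[OF assms(2)] by (auto simp: bij_betw_def)
  fix x assume "x \<in> sphere_set R d \<zero>"
  hence x: "x \<in> vecs R d" "dotp R d x x = \<zero>" unfolding sphere_set_def by auto
  have x0: "x 0 \<in> carrier R" using x(1) assms(2) by (rule vecs_memD)
  have "(x 0 \<oplus> x 0 \<oplus> \<one>) \<otimes> \<one> \<oplus> (x 0 \<oplus> x 0 \<oplus> \<ominus> \<one>) \<otimes> \<ominus> \<one> = \<one> \<oplus> \<one>"
    using x0 by algebra
  hence "\<not> ((x 0 \<oplus> x 0 \<oplus> \<one>) \<otimes> \<one> = \<zero> \<and> (x 0 \<oplus> x 0 \<oplus> \<ominus> \<one>) \<otimes> \<ominus> \<one> = \<zero>)"
    using assms(1) unfolding char_gt_two_def by auto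
  thus "shift 0 \<one> x \<notin> sphere_set R d \<zero> \<or> shift 0 (\<ominus> \<one>) x \<notin> sphere_set R d \<zero>"
    unfolding sphere_set_def using dotp_shift_self[OF x(1) assms(2)] x(2) x0 by auto
qed

definition scale :: "nat \<Rightarrow> 'a \<Rightarrow> (nat \<Rightarrow> 'a) \<Rightarrow> nat \<Rightarrow> 'a" where
  "scale d s x = (\<lambda>i\<in>{..<d}. s \<otimes> x i)"

lemma scale_in_vecs: "s \<in> carrier R \<Longrightarrow> x \<in> vecs R d \<Longrightarrow> scale d s x \<in> vecs R d"
  unfolding scale_def by (intro restrict_in_vecs) (auto simp: vecs_memD)

lemma scale_scale:
  "s \<in> carrier R \<Longrightarrow> t \<in> carrier R \<Longrightarrow> x \<in> vecs R d \<Longrightarrow> scale d s (scale d t x) = scale d (s \<otimes> t) x"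
  unfolding scale_def by (auto simp: vecs_memD m_assoc)

lemma scale_one: "x \<in> vecs R d \<Longrightarrow> scale d \<one> x = x"
  by (rule vecs_eqI[of _ d]) (auto simp: scale_def vecs_memD intro: restrict_in_vecs)

lemma bij_betw_scale:
  assumes "s \<in> carrier R" and "s \<noteq> \<zero>"
  shows "bij_betw (scale d s) (vecs R d) (vecs R d)"
  using nonzero_inverse[OF assms] assms
  by (intro bij_betw_byWitness[where f' = "scale d (inv s)"]) (auto simp: scale_scale scale_one scale_in_vecs)

lemma dotp_scale_left:
  assumes "s \<in> carrier R" "x \<in> vecs R d" "y \<in> vecs R d"
  shows "dotp R d (scale d s x) y = s \<otimes> dotp R d x y"
  unfolding dotp_def scale_def using assms
  by (subst finsum_rdistr) (auto simp: vecs_memD m_assoc intro!: finsum_cong)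

lemma dotp_scale_right:
  assumes "s \<in> carrier R" "x \<in> vecs R d" "y \<in> vecs R d"
  shows "dotp R d x (scale d s y) = s \<otimes> dotp R d x y"
  using dotp_scale_left[OF assms(1,3,2)] dotp_commute assms scale_in_vecs by metis

definition vec_diff :: "nat \<Rightarrow> (nat \<Rightarrow> 'a) \<Rightarrow> (nat \<Rightarrow> 'a) \<Rightarrow> nat \<Rightarrow> 'a" where
  "vec_diff d x y = (\<lambda>k\<in>{..<d}. x k \<ominus> y k)"

lemma vec_diff_in_vecs: "x \<in> vecs R d \<Longrightarrow> y \<in> vecs R d \<Longrightarrow> vec_diff d x y \<in> vecs R d"
  unfolding vec_diff_def by (intro restrict_in_vecs) (auto simp: vecs_memD)

lemma dotp_vec_diff:
  assumes x: "x \<in> vecs R d" and y: "y \<in> vecs R d" and z: "z \<in> vecs R d"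
  shows "dotp R d (vec_diff d x y) z = dotp R d x z \<ominus> dotp R d y z"
proof -
  have pointwise: "x k \<otimes> z k = (x k \<ominus> y k) \<otimes> z k \<oplus> y k \<otimes> z k" if "k < d" for k
    using vecs_memD[OF x that] vecs_memD[OF y that] vecs_memD[OF z that] by algebra
  have "dotp R d x z = (\<Oplus>k\<in>{..<d}. vec_diff d x y k \<otimes> z k \<oplus> y k \<otimes> z k)"
    unfolding dotp_def vec_diff_def using x y z pointwise by (intro finsum_cong') (auto simp: vecs_memD)
  also have "\<dots> = dotp R d (vec_diff d x y) z \<oplus> dotp R d y z"
    unfolding dotp_def using vec_diff_in_vecs[OF x y] y z by (intro finsum_addf) (auto simp: vecs_memD)
  finally show ?thesis
    using dotp_closed[OF vec_diff_in_vecs[OF x y] z] dotp_closed[OF y z] by algebra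
qed

lemma card_scale_fibre_le_2:
  assumes j: "j \<in> carrier R" "j \<noteq> \<zero>"
  shows "card {p \<in> sphere_set R d j \<times> (carrier R - {\<zero>}). scale d (snd p) (fst p) = y} \<le> 2"
proof (cases "\<exists>p \<in> sphere_set R d j \<times> (carrier R - {\<zero>}). scale d (snd p) (fst p) = y")
  case True
  then obtain x0 s0 where x0: "x0 \<in> vecs R d" "dotp R d x0 x0 = j" and s0: "s0 \<in> carrier R" "s0 \<noteq> \<zero>"
    and y: "scale d s0 x0 = y" unfolding sphere_set_def by auto
  have "{p \<in> sphere_set R d j \<times> (carrier R - {\<zero>}). scale d (snd p) (fst p) = y}
      \<subseteq> {(x0, s0), (scale d (\<ominus> \<one>) x0, \<ominus> s0)}"
  proof
    fix p assume "p \<in> {p \<in> sphere_set R d j \<times> (carrier R - {\<zero>}). scale d (snd p) (fst p) = y}"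
    moreover obtain x s where p: "p = (x, s)" by (cases p)
    ultimately have x: "x \<in> vecs R d" "dotp R d x x = j"
      and s: "s \<in> carrier R" "s \<noteq> \<zero>" and xs: "scale d s x = y"
      unfolding sphere_set_def by auto
    note inv_s = nonzero_inverse[OF s]
    define u where "u = inv s \<otimes> s0"
    have u: "u \<in> carrier R" unfolding u_def using inv_s s0 by simp
    have "x = scale d (inv s) (scale d s x)" using inv_s x s by (simp add: scale_scale scale_one)
    also have "\<dots> = scale d (inv s) (scale d s0 x0)" using xs y by simp
    also have "\<dots> = scale d u x0" using inv_s s0 x0 by (simp add: scale_scale u_def)
    finally have xu: "x = scale d u x0" .
    hence "\<one> \<otimes> j = (u \<otimes> u) \<otimes> j"
      using x(2) x0 u j by (simp add: dotp_scale_left dotp_scale_right scale_in_vecs m_assoc)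
    hence "\<one> = u \<otimes> u" using m_rcancel[OF j(2) j(1) one_closed, of "u \<otimes> u"] u by simp
    hence "u = \<one> \<or> u = \<ominus> \<one>" using square_eq_square_iff[OF u one_closed] by (metis l_one one_closed)
    moreover have "s \<otimes> u = s0" unfolding u_def using inv_s s s0 by (simp add: m_assoc[symmetric])
    ultimately show "p \<in> {(x0, s0), (scale d (\<ominus> \<one>) x0, \<ominus> s0)}"
      using p xu s x0 by (auto simp: scale_one r_minus)
  qed
  hence "card {p \<in> sphere_set R d j \<times> (carrier R - {\<zero>}). scale d (snd p) (fst p) = y}
      \<le> card {(x0, s0), (scale d (\<ominus> \<one>) x0, \<ominus> s0)}" by (intro card_mono) auto
  also have "\<dots> \<le> 2" by (simp add: card_insert_le_m1)
  finally show ?thesis .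
next
  case False
  hence "{p \<in> sphere_set R d j \<times> (carrier R - {\<zero>}). scale d (snd p) (fst p) = y} = {}" by auto
  thus ?thesis by (metis card.empty zero_le)
qed

lemma finsum_lessThan_double:
  fixes n :: nat
  shows "f \<in> {..<2 * n} \<rightarrow> carrier R \<Longrightarrow> finsum R f {..<2 * n} = (\<Oplus>i\<in>{..<n}. f (2 * i) \<oplus> f (2 * i + 1))"
proof (induction n)
  case (Suc n)
  have c: "f (2 * n) \<in> carrier R" "f (2 * n + 1) \<in> carrier R" and f: "f \<in> {..<2 * n} \<rightarrow> carrier R"
    using Suc.prems by auto
  have "{..<2 * Suc n} = insert (2 * n + 1) (insert (2 * n) {..<2 * n})" by auto
  hence "finsum R f {..<2 * Suc n} = f (2 * n + 1) \<oplus> (f (2 * n) \<oplus> finsum R f {..<2 * n})"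
    using c f by (simp add: finsum_insert finsum_closed Pi_def)
  also have "\<dots> = (f (2 * n) \<oplus> f (2 * n + 1)) \<oplus> finsum R f {..<2 * n}"
    using c finsum_closed[OF f] by algebra
  also have "\<dots> = (\<Oplus>i\<in>insert n {..<n}. f (2 * i) \<oplus> f (2 * i + 1))"
    using Suc.IH[OF f] c f by (simp add: finsum_insert Pi_def del: finsum_addf)
  finally show ?case by (simp add: lessThan_Suc)
qed simp

text \<open>Multiplication by \<open>a + b i\<close> in each coordinate plane \<open>(x\<^sub>2\<^sub>k, x\<^sub>2\<^sub>k\<^sub>+\<^sub>1)\<close>.\<close>
definition rotation :: "nat \<Rightarrow> 'a \<Rightarrow> 'a \<Rightarrow> (nat \<Rightarrow> 'a) \<Rightarrow> nat \<Rightarrow> 'a" where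
  "rotation d a b x =
     (\<lambda>i\<in>{..<d}. if even i then a \<otimes> x i \<ominus> b \<otimes> x (Suc i) else b \<otimes> x (i - 1) \<oplus> a \<otimes> x i)"

lemma rotation_even_odd:
  assumes "k < n"
  shows "rotation (2 * n) a b x (2 * k) = a \<otimes> x (2 * k) \<ominus> b \<otimes> x (2 * k + 1)"
    and "rotation (2 * n) a b x (2 * k + 1) = b \<otimes> x (2 * k) \<oplus> a \<otimes> x (2 * k + 1)"
  using assms unfolding rotation_def by auto

lemma rotation_in_vecs:
  assumes "a \<in> carrier R" "b \<in> carrier R" "x \<in> vecs R (2 * n)"
  shows "rotation (2 * n) a b x \<in> vecs R (2 * n)"
  unfolding rotation_def
proof (rule restrict_in_vecs)
  fix i assume "i < 2 * n"
  moreover have "even i \<Longrightarrow> i < 2 * n \<Longrightarrow> Suc i < 2 * n" by presburger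
  ultimately show "(if even i then a \<otimes> x i \<ominus> b \<otimes> x (Suc i) else b \<otimes> x (i - 1) \<oplus> a \<otimes> x i) \<in> carrier R"
    using assms by (auto simp: vecs_memD)
qed

lemma dotp_self_pairs:
  "y \<in> vecs R (2 * n) \<Longrightarrow>
    dotp R (2 * n) y y = (\<Oplus>k\<in>{..<n}. y (2 * k) \<otimes> y (2 * k) \<oplus> y (2 * k + 1) \<otimes> y (2 * k + 1))"
  unfolding dotp_def by (rule finsum_lessThan_double) (auto simp: vecs_memD)

lemma dotp_rotation:
  assumes ab: "a \<in> carrier R" "b \<in> carrier R" and x: "x \<in> vecs R (2 * n)"
  shows "dotp R (2 * n) (rotation (2 * n) a b x) (rotation (2 * n) a b x) = (a \<otimes> a \<oplus> b \<otimes> b) \<otimes> dotp R (2 * n) x x"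
proof -
  let ?y = "rotation (2 * n) a b x" and ?sq = "\<lambda>x k. x (2 * k) \<otimes> x (2 * k) \<oplus> x (2 * k + 1) \<otimes> x (2 * k + 1)"
  have c: "x (2 * k) \<in> carrier R" "x (2 * k + 1) \<in> carrier R" if "k < n" for k
    using x that by (auto simp: vecs_memD)
  have "dotp R (2 * n) ?y ?y = (\<Oplus>k\<in>{..<n}. ?sq ?y k)"
    using dotp_self_pairs rotation_in_vecs[OF ab x] by blast
  also have "\<dots> = (\<Oplus>k\<in>{..<n}. (a \<otimes> a \<oplus> b \<otimes> b) \<otimes> ?sq x k)"
  proof (rule finsum_cong')
    fix k assume "k \<in> {..<n}"
    hence k: "k < n" by simp
    show "?sq ?y k = (a \<otimes> a \<oplus> b \<otimes> b) \<otimes> ?sq x k"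
      unfolding rotation_even_odd[OF k] using c[OF k] ab by algebra
  qed (use c ab in auto)
  also have "\<dots> = (a \<otimes> a \<oplus> b \<otimes> b) \<otimes> dotp R (2 * n) x x"
    using dotp_self_pairs[OF x] c ab by (simp add: finsum_rdistr Pi_def del: finsum_addf)
  finally show ?thesis .
qed

lemma rotation_pair_inj:
  assumes c: "a \<in> carrier R" "b \<in> carrier R" "u \<in> carrier R" "v \<in> carrier R" "u' \<in> carrier R" "v' \<in> carrier R"
    and t: "a \<otimes> a \<oplus> b \<otimes> b \<noteq> \<zero>"
    and e1: "a \<otimes> u \<ominus> b \<otimes> v = a \<otimes> u' \<ominus> b \<otimes> v'" and e2: "b \<otimes> u \<oplus> a \<otimes> v = b \<otimes> u' \<oplus> a \<otimes> v'"
  shows "u = u' \<and> v = v'"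
proof -
  have tc: "a \<otimes> a \<oplus> b \<otimes> b \<in> carrier R" using c by simp
  have "(a \<otimes> a \<oplus> b \<otimes> b) \<otimes> u = a \<otimes> (a \<otimes> u \<ominus> b \<otimes> v) \<oplus> b \<otimes> (b \<otimes> u \<oplus> a \<otimes> v)" using c by algebra
  also have "\<dots> = (a \<otimes> a \<oplus> b \<otimes> b) \<otimes> u'" unfolding e1 e2 using c by algebra
  finally have "u = u'" using m_lcancel[OF t tc] c by simp
  have "(a \<otimes> a \<oplus> b \<otimes> b) \<otimes> v = \<ominus> b \<otimes> (a \<otimes> u \<ominus> b \<otimes> v) \<oplus> a \<otimes> (b \<otimes> u \<oplus> a \<otimes> v)" using c by algebra
  also have "\<dots> = (a \<otimes> a \<oplus> b \<otimes> b) \<otimes> v'" unfolding e1 e2 using c by algebra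
  finally have "v = v'" using m_lcancel[OF t tc] c by simp
  with \<open>u = u'\<close> show ?thesis by simp
qed

lemma inj_on_rotation:
  assumes ab: "a \<in> carrier R" "b \<in> carrier R" and t: "a \<otimes> a \<oplus> b \<otimes> b \<noteq> \<zero>"
  shows "inj_on (rotation (2 * n) a b) (vecs R (2 * n))"
proof (rule inj_onI)
  fix x y assume x: "x \<in> vecs R (2 * n)" and y: "y \<in> vecs R (2 * n)"
    and e: "rotation (2 * n) a b x = rotation (2 * n) a b y"
  have pair: "x (2 * k) = y (2 * k) \<and> x (2 * k + 1) = y (2 * k + 1)" if k: "k < n" for k
  proof (rule rotation_pair_inj[OF ab _ _ _ _ t])
    show "x (2 * k) \<in> carrier R" "x (2 * k + 1) \<in> carrier R" "y (2 * k) \<in> carrier R" "y (2 * k + 1) \<in> carrier R"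
      using x y k by (auto simp: vecs_memD)
    show "a \<otimes> x (2 * k) \<ominus> b \<otimes> x (2 * k + 1) = a \<otimes> y (2 * k) \<ominus> b \<otimes> y (2 * k + 1)"
      using e rotation_even_odd(1)[OF k, of a b] by metis
    show "b \<otimes> x (2 * k) \<oplus> a \<otimes> x (2 * k + 1) = b \<otimes> y (2 * k) \<oplus> a \<otimes> y (2 * k + 1)"
      using e rotation_even_odd(2)[OF k, of a b] by metis
  qed
  show "x = y"
  proof (rule vecs_eqI[OF x y])
    fix i assume "i < 2 * n"
    hence "i div 2 < n" by simp
    moreover have "i = 2 * (i div 2) \<or> i = 2 * (i div 2) + 1" by presburger
    ultimately show "x i = y i" using pair by metis
  qed
qed

lemma card_sphere_le:
  assumes "even d" and k: "k \<in> carrier R" "k \<noteq> \<zero>" and j: "j \<in> carrier R" "j \<noteq> \<zero>"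
  shows "card (sphere_set R d k) \<le> card (sphere_set R d j)"
proof -
  obtain n where d: "d = 2 * n" using \<open>even d\<close> by blast
  define t where "t = j \<otimes> inv k"
  have t: "t \<in> carrier R" and tk: "t \<otimes> k = j"
    unfolding t_def using j nonzero_inverse[OF k] k by (auto simp: m_assoc)
  obtain a b where ab: "a \<in> carrier R" "b \<in> carrier R" "t = a \<otimes> a \<oplus> b \<otimes> b"
    using sum_of_two_squares[OF t] by blast
  have "t \<noteq> \<zero>" using tk j k by auto
  show ?thesis unfolding d
  proof (rule card_inj_on_le)
    show "inj_on (rotation (2 * n) a b) (sphere_set R (2 * n) k)"
      using inj_on_rotation[OF ab(1,2)] \<open>t \<noteq> \<zero>\<close> ab(3) sphere_subset_vecs by (metis inj_on_subset)
    show "rotation (2 * n) a b ` sphere_set R (2 * n) k \<subseteq> sphere_set R (2 * n) j"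
      using rotation_in_vecs[OF ab(1,2)] dotp_rotation[OF ab(1,2)] ab(3) tk
      unfolding sphere_set_def by auto
    show "finite (sphere_set R (2 * n) j)"
      using vecs_finite sphere_subset_vecs by (rule finite_subset[rotated])
  qed
qed

lemma card_vecs_le_sphere:
  assumes "char_gt_two R" and "even d" and "0 < d" and j: "j \<in> carrier R" "j \<noteq> \<zero>"
  shows "card (vecs R d) \<le> 3 * ((card (carrier R) - 1) * card (sphere_set R d j))"
proof -
  let ?V = "vecs R d" and ?S0 = "sphere_set R d \<zero>" and ?K = "carrier R - {\<zero>}"
  have "?V - ?S0 \<subseteq> (\<Union>k\<in>?K. sphere_set R d k)"
    unfolding sphere_set_def using dotp_closed by blast
  moreover have "finite (\<Union>k\<in>?K. sphere_set R d k)"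
    by (intro finite_UN_I) (auto simp: finite_carrier intro: finite_subset[OF sphere_subset_vecs vecs_finite])
  ultimately have "card (?V - ?S0) \<le> card (\<Union>k\<in>?K. sphere_set R d k)" by (intro card_mono)
  also have "\<dots> \<le> (\<Sum>k\<in>?K. card (sphere_set R d k))" by (rule card_UN_le) (simp add: finite_carrier)
  also have "\<dots> \<le> (\<Sum>k\<in>?K. card (sphere_set R d j))"
    using card_sphere_le[OF \<open>even d\<close> _ _ j] by (intro sum_mono) blast
  also have "\<dots> = (card (carrier R) - 1) * card (sphere_set R d j)"
    by (simp add: finite_carrier card_Diff_singleton)
  finally have "card (?V - ?S0) \<le> (card (carrier R) - 1) * card (sphere_set R d j)" .
  moreover have "card ?S0 \<le> 2 * card (?V - ?S0)" using card_null_sphere_le assms(1,3) .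
  moreover have "card ?V = card ?S0 + card (?V - ?S0)"
    using vecs_finite sphere_subset_vecs
    by (metis card_Diff_subset card_mono finite_subset le_add_diff_inverse)
  ultimately show ?thesis by linarith
qed

end

locale additive_character = finite_field +
  fixes chi :: "'a \<Rightarrow> complex"
  assumes nontrivial_char: "nontrivial_add_char R chi"
begin

lemma chi_nonzero: "a \<in> carrier R \<Longrightarrow> chi a \<noteq> 0"
  using nontrivial_char unfolding nontrivial_add_char_def by blast

lemma chi_add: "a \<in> carrier R \<Longrightarrow> b \<in> carrier R \<Longrightarrow> chi (a \<oplus> b) = chi a * chi b"
  using nontrivial_char unfolding nontrivial_add_char_def by blast

lemma chi_zero: "chi \<zero> = 1"
  using chi_add[of \<zero> \<zero>] chi_nonzero[of \<zero>] by simp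

lemma chi_minus: "a \<in> carrier R \<Longrightarrow> chi a * chi (\<ominus> a) = 1"
  using chi_add[of a "\<ominus> a"] chi_zero by (simp add: r_neg)

text \<open>At a maximum \<open>M\<close> of \<open>|\<chi>|\<close> one has \<open>M\<^sup>2 = |\<chi>(2x\<^sub>0)| \<le> M\<close>.\<close>
lemma norm_chi_le_one:
  assumes "a \<in> carrier R"
  shows "cmod (chi a) \<le> 1"
proof -
  define M where "M = Max ((\<lambda>x. cmod (chi x)) ` carrier R)"
  have le_M: "cmod (chi x) \<le> M" if "x \<in> carrier R" for x
    unfolding M_def using finite_carrier that by (intro Max_ge) auto
  have "M \<in> (\<lambda>x. cmod (chi x)) ` carrier R"
    unfolding M_def using finite_carrier assms by (intro Max_in) auto
  then obtain x0 where x0: "x0 \<in> carrier R" "M = cmod (chi x0)" by auto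
  have "M * M \<le> M" using le_M[of "x0 \<oplus> x0"] chi_add[OF x0(1) x0(1)] x0 by (simp add: norm_mult)
  moreover have "M > 0" using x0 chi_nonzero by simp
  ultimately have "M \<le> 1" by (simp add: mult_le_cancel_left1)
  thus ?thesis using le_M[OF assms] by simp
qed

lemma norm_chi:
  assumes "a \<in> carrier R"
  shows "cmod (chi a) = 1"
proof -
  have "1 = cmod (chi a) * cmod (chi (\<ominus> a))" using chi_minus[OF assms] by (metis norm_mult norm_one)
  also have "\<dots> \<le> cmod (chi a)" using norm_chi_le_one[of "\<ominus> a"] assms by (simp add: mult_left_le)
  finally show ?thesis using norm_chi_le_one[OF assms] by simp
qed

lemma chi_uminus:
  assumes "a \<in> carrier R"
  shows "chi (\<ominus> a) = cnj (chi a)"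
proof -
  have "chi a * cnj (chi a) = 1" using norm_chi[OF assms]
    by (metis complex_norm_square mult.commute of_real_1 power_one)
  thus ?thesis using chi_minus[OF assms] chi_nonzero[OF assms] by (metis mult_left_cancel)
qed

lemma character_sum_vanishes:
  assumes w: "w \<in> vecs R d" and i: "i < d" and "w i \<noteq> \<zero>"
  shows "(\<Sum>y\<in>vecs R d. chi (dotp R d w y)) = 0"
proof -
  obtain b where b: "b \<in> carrier R" "chi b \<noteq> 1"
    using nontrivial_char unfolding nontrivial_add_char_def by blast
  have wi: "w i \<in> carrier R" using w i by (rule vecs_memD)
  define t where "t = inv (w i) \<otimes> b"
  have t: "t \<in> carrier R" and wt: "w i \<otimes> t = b"
    unfolding t_def using nonzero_inverse[OF wi assms(3)] b wi by (auto simp: m_assoc[symmetric])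
  have "(\<Sum>y\<in>vecs R d. chi (dotp R d w y)) = (\<Sum>y\<in>vecs R d. chi (dotp R d w (shift i t y)))"
    by (rule sum.reindex_bij_betw[OF bij_betw_shift[OF i t], symmetric])
  also have "\<dots> = (\<Sum>y\<in>vecs R d. chi b * chi (dotp R d w y))"
    using dotp_shift[OF w _ i t] wt chi_add dotp_closed[OF w] b by (intro sum.cong) (auto simp: mult.commute)
  also have "\<dots> = chi b * (\<Sum>y\<in>vecs R d. chi (dotp R d w y))" by (simp add: sum_distrib_left)
  finally show ?thesis using b(2) by (metis mult_cancel_right1)
qed

lemma character_sum_vec_diff:
  assumes m: "m \<in> vecs R d" and m': "m' \<in> vecs R d"
  shows "(\<Sum>y\<in>vecs R d. chi (dotp R d (vec_diff d m' m) y)) = (if m' = m then of_nat (card (vecs R d)) else 0)"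
proof (cases "m' = m")
  case True
  thus ?thesis using m dotp_closed[OF m] by (simp add: dotp_vec_diff r_neg[folded a_minus_def] chi_zero)
next
  case False
  then obtain i where i: "i < d" "m' i \<noteq> m i" using vecs_eqI[OF m' m] by blast
  hence "vec_diff d m' m i \<noteq> \<zero>"
    unfolding vec_diff_def using minus_eq_zero_iff vecs_memD[OF m] vecs_memD[OF m'] by auto
  thus ?thesis using character_sum_vanishes[OF vec_diff_in_vecs[OF m' m] i(1)] False by simp
qed

lemma norm_fourier_squared:
  assumes y: "y \<in> vecs R d"
  shows "complex_of_real ((cmod (fourier R chi d g y))\<^sup>2) =
    (\<Sum>m\<in>vecs R d. \<Sum>m'\<in>vecs R d. chi (dotp R d (vec_diff d m' m) y) * (g m * cnj (g m')))"
proof -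
  let ?V = "vecs R d" and ?F = "fourier R chi d g"
  have "complex_of_real ((cmod (?F y))\<^sup>2) = ?F y * cnj (?F y)" by (rule complex_norm_square)
  also have "\<dots> = (\<Sum>m\<in>?V. \<Sum>m'\<in>?V. (chi (\<ominus> dotp R d m y) * g m) * cnj (chi (\<ominus> dotp R d m' y) * g m'))"
    unfolding fourier_def by (simp add: sum_product)
  also have "\<dots> = (\<Sum>m\<in>?V. \<Sum>m'\<in>?V. chi (dotp R d (vec_diff d m' m) y) * (g m * cnj (g m')))"
  proof (intro sum.cong refl)
    fix m m' assume m: "m \<in> ?V" and m': "m' \<in> ?V"
    have c: "dotp R d m y \<in> carrier R" "dotp R d m' y \<in> carrier R" using dotp_closed m m' y by auto
    have "chi (\<ominus> dotp R d m y) * cnj (chi (\<ominus> dotp R d m' y)) = chi (dotp R d (vec_diff d m' m) y)"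
      using chi_add[of "dotp R d m' y" "\<ominus> dotp R d m y"] chi_uminus[OF c(2)] c
      by (simp add: dotp_vec_diff[OF m' m y] a_minus_def mult.commute)
    thus "(chi (\<ominus> dotp R d m y) * g m) * cnj (chi (\<ominus> dotp R d m' y) * g m') =
        chi (dotp R d (vec_diff d m' m) y) * (g m * cnj (g m'))"
      by (metis (no_types, lifting) complex_cnj_mult mult.assoc mult.left_commute)
  qed
  finally show ?thesis .
qed

lemma plancherel:
  "(\<Sum>y\<in>vecs R d. (cmod (fourier R chi d g y))\<^sup>2) = real (card (vecs R d)) * (\<Sum>m\<in>vecs R d. (cmod (g m))\<^sup>2)"
proof -
  let ?V = "vecs R d"
  have "complex_of_real (\<Sum>y\<in>?V. (cmod (fourier R chi d g y))\<^sup>2) =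
      (\<Sum>y\<in>?V. \<Sum>m\<in>?V. \<Sum>m'\<in>?V. chi (dotp R d (vec_diff d m' m) y) * (g m * cnj (g m')))"
    using norm_fourier_squared by simp
  also have "\<dots> = (\<Sum>m\<in>?V. \<Sum>m'\<in>?V. (\<Sum>y\<in>?V. chi (dotp R d (vec_diff d m' m) y)) * (g m * cnj (g m')))"
    by (subst sum.swap, rule sum.cong[OF refl], subst sum.swap) (simp add: sum_distrib_right)
  also have "\<dots> = (\<Sum>m\<in>?V. \<Sum>m'\<in>?V. if m' = m then of_nat (card ?V) * (g m * cnj (g m')) else 0)"
    by (intro sum.cong refl) (simp add: character_sum_vec_diff)
  also have "\<dots> = (\<Sum>m\<in>?V. (g m * cnj (g m)) * of_nat (card ?V))"
    by (intro sum.cong refl) (simp add: vecs_finite mult.commute)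
  also have "\<dots> = complex_of_real (real (card ?V) * (\<Sum>m\<in>?V. (cmod (g m))\<^sup>2))"
    by (simp add: complex_norm_square[symmetric] sum_distrib_left mult.commute)
  finally show ?thesis by (simp only: of_real_eq_iff)
qed

lemma fourier_scale:
  assumes "homogeneous_deg0 R d g" and s: "s \<in> carrier R" "s \<noteq> \<zero>" and x: "x \<in> vecs R d"
  shows "fourier R chi d g (scale d s x) = fourier R chi d g x"
proof -
  have "g (scale d s m) = g m" if "m \<in> vecs R d" for m
    using assms(1) s that unfolding homogeneous_deg0_def scale_def by auto
  hence "fourier R chi d g (scale d s x) = (\<Sum>m\<in>vecs R d. chi (\<ominus> dotp R d (scale d s m) x) * g (scale d s m))"
    unfolding fourier_def using dotp_scale_left dotp_scale_right s x by (intro sum.cong refl) auto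
  also have "\<dots> = fourier R chi d g x"
    unfolding fourier_def by (rule sum.reindex_bij_betw[OF bij_betw_scale[OF s]])
  finally show ?thesis .
qed

lemma sphere_sum_fourier_le:
  assumes j: "j \<in> carrier R" "j \<noteq> \<zero>" and hg: "homogeneous_deg0 R d g"
  shows "real (card (carrier R) - 1) * (\<Sum>x\<in>sphere_set R d j. (cmod (fourier R chi d g x))\<^sup>2)
     \<le> 2 * (\<Sum>y\<in>vecs R d. (cmod (fourier R chi d g y))\<^sup>2)"
proof -
  let ?P = "sphere_set R d j \<times> (carrier R - {\<zero>})"
  define h where "h y = (cmod (fourier R chi d g y))\<^sup>2" for y
  define \<phi> where "\<phi> p = scale d (snd p) (fst p)" for p
  have "finite ?P"
    using finite_carrier finite_subset[OF sphere_subset_vecs vecs_finite] by blast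
  have "real (card (carrier R) - 1) * (\<Sum>x\<in>sphere_set R d j. h x)
      = (\<Sum>x\<in>sphere_set R d j. \<Sum>s\<in>carrier R - {\<zero>}. h x)"
    by (simp add: finite_carrier card_Diff_singleton sum_distrib_left)
  also have "\<dots> = (\<Sum>p\<in>?P. h (fst p))"
    by (subst sum.cartesian_product) (simp add: case_prod_beta)
  also have "\<dots> = (\<Sum>p\<in>?P. h (\<phi> p))"
  proof (rule sum.cong[OF refl])
    fix p assume "p \<in> ?P"
    hence "fst p \<in> vecs R d" "snd p \<in> carrier R" "snd p \<noteq> \<zero>" using sphere_subset_vecs[of d j] by auto
    thus "h (fst p) = h (\<phi> p)" unfolding h_def \<phi>_def using fourier_scale[OF hg] by simp
  qed
  also have "\<dots> = (\<Sum>y\<in>vecs R d. \<Sum>p\<in>{p \<in> ?P. \<phi> p = y}. h (\<phi> p))"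
    using \<open>finite ?P\<close> vecs_finite scale_in_vecs sphere_subset_vecs[of d j] unfolding \<phi>_def
    by (intro sum.group[symmetric]) auto
  also have "\<dots> = (\<Sum>y\<in>vecs R d. h y * real (card {p \<in> ?P. \<phi> p = y}))"
    by (intro sum.cong refl) (simp add: mult.commute)
  also have "\<dots> \<le> (\<Sum>y\<in>vecs R d. h y * 2)"
    using card_scale_fibre_le_2[OF j] unfolding h_def \<phi>_def by (intro sum_mono mult_left_mono) auto
  finally show ?thesis unfolding h_def by (simp add: sum_distrib_left mult.commute)
qed

lemma sphere_average_fourier_le:
  assumes "char_gt_two R" and "even d" and "0 < d" and j: "j \<in> carrier R" "j \<noteq> \<zero>"
    and "homogeneous_deg0 R d g"
  shows "1 / real (card (sphere_set R d j)) * (\<Sum>x\<in>sphere_set R d j. (cmod (fourier R chi d g x))\<^sup>2)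
      \<le> 6 * (\<Sum>m\<in>vecs R d. (cmod (g m))\<^sup>2)"
proof -
  define q where "q = real (card (carrier R) - 1)"
  define s where "s = real (card (sphere_set R d j))"
  define A where "A = (\<Sum>x\<in>sphere_set R d j. (cmod (fourier R chi d g x))\<^sup>2)"
  define G where "G = (\<Sum>m\<in>vecs R d. (cmod (g m))\<^sup>2)"
  have "q > 0" unfolding q_def using two_le_card_carrier by simp
  have "G \<ge> 0" unfolding G_def by (intro sum_nonneg) simp
  have V: "real (card (vecs R d)) \<le> 3 * (q * s)"
    using card_vecs_le_sphere[OF assms(1-3) j] unfolding q_def s_def by (simp flip: of_nat_mult)
  moreover have "real (card (vecs R d)) > 0"
    using card_vecs two_le_card_carrier by simp
  ultimately have "q * s > 0" by linarith
  hence "s > 0" using \<open>q > 0\<close> by (simp add: zero_less_mult_iff)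
  have "q * A \<le> 2 * (real (card (vecs R d)) * G)"
    using sphere_sum_fourier_le[OF j assms(6)] plancherel unfolding q_def A_def G_def by simp
  also have "\<dots> \<le> q * (6 * s * G)" using mult_right_mono[OF V \<open>G \<ge> 0\<close>] by (simp add: mult_ac)
  finally have "A \<le> 6 * s * G" using \<open>q > 0\<close> by simp
  thus ?thesis using \<open>s > 0\<close> unfolding A_def G_def s_def by (simp add: field_simps)
qed

end

theorem theorem2p2:
  fixes d :: nat
  assumes "even d" and "d \<ge> 2"
  shows "\<exists>C>0. \<forall>(R :: nat ring) (chi :: nat \<Rightarrow> complex) j (g :: (nat \<Rightarrow> nat) \<Rightarrow> complex).
           field R \<longrightarrow> finite (carrier R) \<longrightarrow> char_gt_two R \<longrightarrow>
           nontrivial_add_char R chi \<longrightarrow>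
           j \<in> carrier R - {\<zero>\<^bsub>R\<^esub>} \<longrightarrow> homogeneous_deg0 R d g \<longrightarrow>
           sqrt ((1 / real (card (sphere_set R d j))) *
                 (\<Sum>x\<in>sphere_set R d j. (cmod (fourier R chi d g x))\<^sup>2))
           \<le> C * (\<Sum>m\<in>vecs R d. cmod (g m) powr ((2 * real d + 4) / (real d + 4)))
                   powr ((real d + 4) / (2 * real d + 4))"
proof (intro exI[of _ "sqrt 6"] conjI allI impI)
  fix R :: "nat ring" and chi :: "nat \<Rightarrow> complex" and j and g :: "(nat \<Rightarrow> nat) \<Rightarrow> complex"
  assume "field R" "finite (carrier R)" "char_gt_two R" "nontrivial_add_char R chi"
    and j: "j \<in> carrier R - {\<zero>\<^bsub>R\<^esub>}" and "homogeneous_deg0 R d g"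
  then interpret additive_character R chi
    by (simp add: additive_character_def additive_character_axioms_def finite_field_def finite_field_axioms_def)
  have "sqrt (1 / real (card (sphere_set R d j)) * (\<Sum>x\<in>sphere_set R d j. (cmod (fourier R chi d g x))\<^sup>2))
      \<le> sqrt (6 * (\<Sum>m\<in>vecs R d. (cmod (g m))\<^sup>2))"
    using sphere_average_fourier_le[OF \<open>char_gt_two R\<close> \<open>even d\<close>] assms(2) j \<open>homogeneous_deg0 R d g\<close>
    by simp
  also have "\<dots> \<le> sqrt 6 * (\<Sum>m\<in>vecs R d. cmod (g m) powr ((2 * real d + 4) / (real d + 4)))
                   powr ((real d + 4) / (2 * real d + 4))"
  proof -
    have "(2 * real d + 4) / (real d + 4) * ((real d + 4) / (2 * real d + 4)) = 1"
      by (simp add: add_pos_pos)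
    hence "sqrt (\<Sum>m\<in>vecs R d. (cmod (g m))\<^sup>2) \<le> (\<Sum>m\<in>vecs R d. cmod (g m) powr ((2 * real d + 4) / (real d + 4)))
                   powr ((real d + 4) / (2 * real d + 4))"
      by (intro l2_le_lp_norm vecs_finite) (auto simp: divide_le_eq)
    thus ?thesis by (simp add: real_sqrt_mult)
  qed
  finally show "sqrt (1 / real (card (sphere_set R d j)) * (\<Sum>x\<in>sphere_set R d j. (cmod (fourier R chi d g x))\<^sup>2))
      \<le> sqrt 6 * (\<Sum>m\<in>vecs R d. cmod (g m) powr ((2 * real d + 4) / (real d + 4)))
                   powr ((real d + 4) / (2 * real d + 4))" .
qed simp

end
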